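(* For the measure $\mu$ defined by $\int_{\mathbb{L}}\varphi\,\mathrm{d}\mu=\mathbb{E}[\varphi(\Lambda(X,Y))/d(X,Y)^2]$, with $X,Y$ independent non-backtracking random walks on $\mathbb{T}$ from the root, one has $$\mu\langle x,y\rangle=\tfrac{8}{9}\cdot 2^{-d(x,y)}\quad\text{for all vertices }x\neq y\text{ of }\mathbb{T}.$$
   Context: $\mathbb{T}$ is the $3$-regular tree with graph distance $d$ and root $\varnothing$. Rays are infinite non-backtracking paths from $\varnothing$, and $\partial\mathbb{T}$ is the set of rays. For distinct rays, $\xi\wedge\eta$ is their last common vertex, and the metric on $\partial\mathbb{T}$ is $d(\xi,\eta)=2^{-d(\varnothing,\xi\wedge\eta)}$. $\Lambda(\xi,\eta)$ is the bi-infinite geodesic (line) with ends $\xi,\eta$, and $\mathbb{L}$ is the set of lines. $\langle x,y\rangle$ is the set of lines passing through both $x$ and $y$. A non-backtracking random walk from the root is viewed as a random element of $\partial\mathbb{T}$. *)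

theory Defs
  imports "HOL-Probability.Probability"
begin

text \<open>Vertices of the 3-regular tree T: finite words; the root is the empty word,
  the first letter ranges over {0,1,2} (the 3 neighbours of the root), every further
  letter over {0,1} (the 2 children of a non-root vertex).\<close>

definition arity :: "nat \<Rightarrow> nat" where
  "arity i = (if i = 0 then 3 else 2)"

definition is_vertex :: "nat list \<Rightarrow> bool" where
  "is_vertex v \<longleftrightarrow> (\<forall>i < length v. v ! i < arity i)"

fun lcp_len :: "nat list \<Rightarrow> nat list \<Rightarrow> nat" where
  "lcp_len (a # as) (b # bs) = (if a = b then Suc (lcp_len as bs) else 0)"
| "lcp_len _ _ = 0"

text \<open>Graph distance in the tree: path through the last common ancestor.\<close>
definition tdist :: "nat list \<Rightarrow> nat list \<Rightarrow> nat" where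
  "tdist x y = length x + length y - 2 * lcp_len x y"

text \<open>Rays (elements of the boundary): infinite non-backtracking paths from the root,
  encoded by their sequence of letters; the ray visits the vertices prefix xi n.\<close>
definition is_ray :: "(nat \<Rightarrow> nat) \<Rightarrow> bool" where
  "is_ray xi \<longleftrightarrow> (\<forall>i. xi i < arity i)"

definition prefix_of :: "(nat \<Rightarrow> nat) \<Rightarrow> nat \<Rightarrow> nat list" where
  "prefix_of xi n = map xi [0..<n]"

text \<open>d(root, xi \<and> eta) for distinct rays: length of the longest common prefix.\<close>
definition conf :: "(nat \<Rightarrow> nat) \<Rightarrow> (nat \<Rightarrow> nat) \<Rightarrow> nat" where
  "conf xi eta = (LEAST n. xi n \<noteq> eta n)"

definition bdist :: "(nat \<Rightarrow> nat) \<Rightarrow> (nat \<Rightarrow> nat) \<Rightarrow> real" where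
  "bdist xi eta = (1/2) ^ conf xi eta"

text \<open>The line Lambda(xi,eta), represented by its vertex set.\<close>
definition Lambda :: "(nat \<Rightarrow> nat) \<Rightarrow> (nat \<Rightarrow> nat) \<Rightarrow> nat list set" where
  "Lambda xi eta = {prefix_of xi n | n. conf xi eta \<le> n} \<union> {prefix_of eta n | n. conf xi eta \<le> n}"

definition lines_through :: "nat list \<Rightarrow> nat list \<Rightarrow> nat list set set" where
  "lines_through x y = {L. (\<exists>xi eta. is_ray xi \<and> is_ray eta \<and> xi \<noteq> eta \<and> L = Lambda xi eta)
                          \<and> x \<in> L \<and> y \<in> L}"

text \<open>Law of the non-backtracking random walk from the root, as a random ray:
  independent uniform letters.\<close>
definition step_pmf :: "nat \<Rightarrow> nat pmf" where
  "step_pmf i = pmf_of_set {0..<arity i}"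

definition nbrw :: "(nat \<Rightarrow> nat) measure" where
  "nbrw = (\<Pi>\<^sub>M i\<in>UNIV. measure_pmf (step_pmf i))"

text \<open>mu(A) = E[ 1_A(Lambda(X,Y)) / d(X,Y)^2 ], X, Y independent walks
  (the diagonal X = Y is a null set and contributes 0).\<close>
definition mu :: "nat list set set \<Rightarrow> ennreal" where
  "mu A = (\<integral>\<^sup>+ p. (if fst p \<noteq> snd p
      then indicator A (Lambda (fst p) (snd p)) * ennreal (1 / (bdist (fst p) (snd p))\<^sup>2)
      else 0) \<partial>(nbrw \<Otimes>\<^sub>M nbrw))"

end

theory Submission
  imports Defs
begin

text \<open>Two distinct rays that part at level c carry the weight d(xi,eta)^-2 = 4^c, and the walk
  passes through a vertex v other than the root with probability (2/3) 2^-|v|.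
  If x and y are incomparable, a line contains both exactly when one of its rays passes through x
  and the other through y; the rays then part at the last common ancestor of x and y, and the
  weight of these pairs is 2 4^|x \<and> y| (2/3 2^-|x|) (2/3 2^-|y|) = (8/9) 2^-d(x,y).
  If x is an ancestor of y, one ray passes through y and the other leaves it at a level k \<le> |x|,
  which happens with probability 2^-k/3 (2/3 for k = 0); the weights 4^k then form a
  geometric sum of the same value.\<close>

lemma PiM_pmf_cylinder:
  fixes p :: "'i \<Rightarrow> 'a pmf"
  assumes "finite J"
  shows "{\<omega>. \<forall>i\<in>J. \<omega> i \<in> S i} \<in> sets (\<Pi>\<^sub>M i\<in>UNIV. measure_pmf (p i))"
    and "emeasure (\<Pi>\<^sub>M i\<in>UNIV. measure_pmf (p i)) {\<omega>. \<forall>i\<in>J. \<omega> i \<in> S i}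
           = (\<Prod>i\<in>J. ennreal (measure_pmf.prob (p i) (S i)))"
proof -
  have cyl: "{\<omega>. \<forall>i\<in>J. \<omega> i \<in> S i} = prod_emb UNIV (\<lambda>i. measure_pmf (p i)) J (Pi\<^sub>E J S)"
    by (auto simp: prod_emb_iff PiE_iff)
  show "{\<omega>. \<forall>i\<in>J. \<omega> i \<in> S i} \<in> sets (\<Pi>\<^sub>M i\<in>UNIV. measure_pmf (p i))"
    unfolding cyl using assms by (intro sets_PiM_I) auto
  show "emeasure (\<Pi>\<^sub>M i\<in>UNIV. measure_pmf (p i)) {\<omega>. \<forall>i\<in>J. \<omega> i \<in> S i}
          = (\<Prod>i\<in>J. ennreal (measure_pmf.prob (p i) (S i)))"
    unfolding cyl using assms
    by (subst emeasure_PiM_emb) (auto simp: measure_pmf.prob_space_axioms measure_pmf.emeasure_eq_measure)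
qed

lemma nn_integral_indicator_Times_symmetric:
  assumes "finite_measure M" and [measurable]: "A \<in> sets M" "B \<in> sets M" and "0 \<le> c"
  shows "(\<integral>\<^sup>+ p. ennreal c * (indicator (A \<times> B) p + indicator (B \<times> A) p) \<partial>(M \<Otimes>\<^sub>M M))
           = ennreal (2 * c * measure M A * measure M B)"
proof -
  interpret finite_measure M by (rule assms(1))
  have "(\<integral>\<^sup>+ p. ennreal c * (indicator (A \<times> B) p + indicator (B \<times> A) p) \<partial>(M \<Otimes>\<^sub>M M))
      = ennreal c * emeasure (M \<Otimes>\<^sub>M M) (A \<times> B) + ennreal c * emeasure (M \<Otimes>\<^sub>M M) (B \<times> A)"
    by (simp add: distrib_left nn_integral_add nn_integral_cmult_indicator)
  also have "\<dots> = ennreal c * (ennreal (measure M A) * ennreal (measure M B))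
                  + ennreal c * (ennreal (measure M B) * ennreal (measure M A))"
    using assms(2,3) by (simp add: emeasure_pair_measure_Times emeasure_eq_measure)
  also have "\<dots> = ennreal (2 * c * measure M A * measure M B)"
    using assms(4) by (simp flip: ennreal_mult ennreal_plus add: algebra_simps)
  finally show ?thesis .
qed

lemma prob_space_nbrw: "prob_space nbrw"
  unfolding nbrw_def by (intro prob_space_PiM) (simp add: measure_pmf.prob_space_axioms)

lemma finite_measure_nbrw: "finite_measure nbrw"
  using prob_space_nbrw by (rule prob_space.finite_measure)

lemma space_nbrw [simp]: "space nbrw = UNIV"
  unfolding nbrw_def by (simp add: space_PiM)

lemma arity_pos: "0 < arity i"
  by (simp add: arity_def)

lemma measure_step_pmf:
  "measure_pmf.prob (step_pmf i) A = card ({0..<arity i} \<inter> A) / arity i"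
  unfolding step_pmf_def using arity_pos[of i] by (subst measure_pmf_of_set) auto

lemma prod_inverse_arity:
  "(\<Prod>i<n. 1 / real (arity i)) = (if n = 0 then 1 else 2/3 * (1/2) ^ n)"
  by (induction n) (auto simp: arity_def)

definition cylinder :: "nat list \<Rightarrow> (nat \<Rightarrow> nat) set" where
  "cylinder v = {\<xi>. \<forall>i<length v. \<xi> i = v ! i}"

definition branch_cylinder :: "nat list \<Rightarrow> nat \<Rightarrow> (nat \<Rightarrow> nat) set" where
  "branch_cylinder v k = {\<xi>. (\<forall>i<k. \<xi> i = v ! i) \<and> \<xi> k \<noteq> v ! k}"

lemma cylinder_eq: "cylinder v = {\<xi>. \<forall>i\<in>{..<length v}. \<xi> i \<in> {v ! i}}"
  by (auto simp: cylinder_def)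

lemma branch_cylinder_eq:
  "branch_cylinder v k = {\<xi>. \<forall>i\<in>{..k}. \<xi> i \<in> (if i < k then {v ! i} else - {v ! k})}"
  by (auto simp: branch_cylinder_def le_less)

lemma sets_cylinder [measurable]: "cylinder v \<in> sets nbrw"
  unfolding cylinder_eq nbrw_def by (rule PiM_pmf_cylinder) auto

lemma sets_branch_cylinder [measurable]: "branch_cylinder v k \<in> sets nbrw"
  unfolding branch_cylinder_eq nbrw_def by (rule PiM_pmf_cylinder) auto

lemma measure_cylinder:
  assumes "is_vertex v" and "v \<noteq> []"
  shows "measure nbrw (cylinder v) = 2/3 * (1/2) ^ length v"
proof -
  have "emeasure nbrw (cylinder v) = (\<Prod>i<length v. ennreal (1 / real (arity i)))"
    unfolding cylinder_eq nbrw_def using assms(1)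
    by (subst PiM_pmf_cylinder) (auto simp: measure_step_pmf is_vertex_def intro!: prod.cong)
  also have "\<dots> = ennreal (2/3 * (1/2) ^ length v)"
    using assms(2) by (simp add: prod_ennreal prod_inverse_arity)
  finally show ?thesis by (simp add: measure_def)
qed

definition branch_prob :: "nat \<Rightarrow> real" where
  "branch_prob k = (if k = 0 then 2/3 else 1/3 * (1/2) ^ k)"

lemma branch_prob_nonneg: "0 \<le> branch_prob k"
  by (simp add: branch_prob_def)

lemma sum_four_power_branch_prob: "(\<Sum>k\<le>n. 4 ^ k * branch_prob k) = 2 ^ Suc n / 3"
proof (induction n)
  case (Suc n)
  have "(4::real) ^ Suc n * branch_prob (Suc n) = 2 ^ Suc n / 3"
    by (simp add: branch_prob_def flip: power_mult_distrib)
  with Suc show ?case by simp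
qed (simp add: branch_prob_def)

lemma measure_branch_cylinder:
  assumes "is_vertex v" and "k < length v"
  shows "measure nbrw (branch_cylinder v k) = branch_prob k"
proof -
  have vk: "v ! k < arity k" using assms unfolding is_vertex_def by blast
  have "{0..<arity k} \<inter> - {v ! k} = {0..<arity k} - {v ! k}" by auto
  then have "card ({0..<arity k} \<inter> - {v ! k}) = arity k - 1"
    using vk by simp
  then have leave: "measure_pmf.prob (step_pmf k) (- {v ! k}) = (real (arity k) - 1) / arity k"
    using arity_pos[of k] by (simp add: measure_step_pmf of_nat_diff)
  have "emeasure nbrw (branch_cylinder v k)
      = (\<Prod>i\<in>{..k}. ennreal (if i < k then 1 / real (arity i) else (real (arity k) - 1) / arity k))"
    unfolding branch_cylinder_eq nbrw_def using assms leave
    by (subst PiM_pmf_cylinder) (auto simp: measure_step_pmf is_vertex_def intro!: prod.cong)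
  also have "\<dots> = ennreal ((\<Prod>i<k. 1 / real (arity i)) * ((real (arity k) - 1) / arity k))"
    using arity_pos[of k]
    by (subst prod_ennreal) (auto simp: lessThan_Suc_atMost[symmetric] Suc_le_eq)
  also have "\<dots> = ennreal (branch_prob k)"
    unfolding prod_inverse_arity by (simp add: arity_def branch_prob_def)
  finally show ?thesis using branch_prob_nonneg[of k] by (simp add: measure_def)
qed

lemma null_sets_non_ray: "{\<xi>. \<not> is_ray \<xi>} \<in> null_sets nbrw"
proof -
  have "{\<xi>. arity i \<le> \<xi> i} \<in> null_sets nbrw" for i
    unfolding nbrw_def null_sets_def
    using PiM_pmf_cylinder[where J="{i}" and p=step_pmf and S="\<lambda>_. {arity i..}"]
    by (auto simp: measure_step_pmf)
  then have "(\<Union>i. {\<xi>. arity i \<le> \<xi> i}) \<in> null_sets nbrw" by blast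
  moreover have "{\<xi>. \<not> is_ray \<xi>} = (\<Union>i. {\<xi>. arity i \<le> \<xi> i})"
    by (auto simp: is_ray_def not_less)
  ultimately show ?thesis by simp
qed

lemma AE_pair_is_ray: "AE p in nbrw \<Otimes>\<^sub>M nbrw. is_ray (fst p) \<and> is_ray (snd p)"
proof -
  interpret prob_space nbrw by (rule prob_space_nbrw)
  let ?N = "{\<xi>. \<not> is_ray \<xi>}"
  have "?N \<times> UNIV \<union> UNIV \<times> ?N \<in> null_sets (nbrw \<Otimes>\<^sub>M nbrw)"
    using null_sets_non_ray
    by (intro null_sets.Un times_in_null_sets1 times_in_null_sets2) (auto simp flip: space_nbrw)
  then show ?thesis by (rule AE_I') auto
qed

lemma lcp_len_le_length: "lcp_len x y \<le> length x" "lcp_len x y \<le> length y"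
  by (induction x y rule: lcp_len.induct) auto

lemma lcp_len_commute: "lcp_len x y = lcp_len y x"
  by (induction x y rule: lcp_len.induct) auto

lemma nth_less_lcp_len: "i < lcp_len x y \<Longrightarrow> x ! i = y ! i"
  by (induction x y arbitrary: i rule: lcp_len.induct) (auto simp: nth_Cons split: if_splits nat.splits)

lemma nth_lcp_len_neq:
  "lcp_len x y < length x \<Longrightarrow> lcp_len x y < length y \<Longrightarrow> x ! lcp_len x y \<noteq> y ! lcp_len x y"
  by (induction x y rule: lcp_len.induct) auto

lemma lcp_len_eq_length_imp_eq: "lcp_len x y = length x \<Longrightarrow> length x = length y \<Longrightarrow> x = y"
  using nth_less_lcp_len[of _ x y] by (auto intro: nth_equalityI)

lemma conf_eqI: "(\<forall>i<k. \<xi> i = \<eta> i) \<Longrightarrow> \<xi> k \<noteq> \<eta> k \<Longrightarrow> conf \<xi> \<eta> = k"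
  unfolding conf_def by (rule Least_equality) (auto simp flip: not_less)

lemma conf_commute: "conf \<xi> \<eta> = conf \<eta> \<xi>"
  by (simp add: conf_def eq_commute)

lemma conf_agree_differ:
  assumes "\<xi> \<noteq> \<eta>"
  shows "\<forall>i<conf \<xi> \<eta>. \<xi> i = \<eta> i" and "\<xi> (conf \<xi> \<eta>) \<noteq> \<eta> (conf \<xi> \<eta>)"
proof -
  from assms have "\<exists>n. \<xi> n \<noteq> \<eta> n" by auto
  then show "\<xi> (conf \<xi> \<eta>) \<noteq> \<eta> (conf \<xi> \<eta>)"
    unfolding conf_def by (rule LeastI_ex)
  show "\<forall>i<conf \<xi> \<eta>. \<xi> i = \<eta> i"
    unfolding conf_def using not_less_Least by blast
qed

lemma inverse_bdist_squared: "1 / (bdist \<xi> \<eta>)\<^sup>2 = 4 ^ conf \<xi> \<eta>"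
proof -
  have "((1/2::real) ^ conf \<xi> \<eta>)\<^sup>2 = (1/4) ^ conf \<xi> \<eta>"
    by (simp add: power2_eq_square flip: power_mult_distrib)
  then show ?thesis unfolding bdist_def by (simp add: power_one_over)
qed

lemma prefix_of_eq_iff: "prefix_of \<xi> n = v \<longleftrightarrow> length v = n \<and> \<xi> \<in> cylinder v"
  unfolding prefix_of_def cylinder_def by (auto simp: list_eq_iff_nth_eq)

lemma mem_Lambda_iff:
  "v \<in> Lambda \<xi> \<eta> \<longleftrightarrow> conf \<xi> \<eta> \<le> length v \<and> (\<xi> \<in> cylinder v \<or> \<eta> \<in> cylinder v)"
proof -
  have "v \<in> {prefix_of \<zeta> n | n. c \<le> n} \<longleftrightarrow> c \<le> length v \<and> \<zeta> \<in> cylinder v" for \<zeta> c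
    using prefix_of_eq_iff[of \<zeta> _ v] by (auto simp: eq_commute[of v])
  then show ?thesis unfolding Lambda_def Un_iff by blast
qed

definition line_weight :: "nat list \<Rightarrow> nat list \<Rightarrow> (nat \<Rightarrow> nat) \<Rightarrow> (nat \<Rightarrow> nat) \<Rightarrow> ennreal" where
  "line_weight x y \<xi> \<eta> =
     (if \<xi> \<noteq> \<eta> \<and> x \<in> Lambda \<xi> \<eta> \<and> y \<in> Lambda \<xi> \<eta> then ennreal (4 ^ conf \<xi> \<eta>) else 0)"

lemma mu_lines_through_eq_nn_integral:
  "mu (lines_through x y) = (\<integral>\<^sup>+ p. line_weight x y (fst p) (snd p) \<partial>(nbrw \<Otimes>\<^sub>M nbrw))"
  unfolding mu_def
proof (rule nn_integral_cong_AE)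
  show "AE p in nbrw \<Otimes>\<^sub>M nbrw. (if fst p \<noteq> snd p
          then indicator (lines_through x y) (Lambda (fst p) (snd p)) * ennreal (1 / (bdist (fst p) (snd p))\<^sup>2)
          else 0) = line_weight x y (fst p) (snd p)"
    using AE_pair_is_ray
    by eventually_elim
      (auto simp: line_weight_def lines_through_def indicator_def inverse_bdist_squared)
qed

lemma cylinder_Int_cylinder:
  "lcp_len x y < length x \<Longrightarrow> lcp_len x y < length y \<Longrightarrow> cylinder x \<inter> cylinder y = {}"
  using nth_lcp_len_neq[of x y] by (auto simp: cylinder_def)

lemma conf_cylinder_cylinder:
  assumes "lcp_len x y < length x" and "lcp_len x y < length y"
    and "\<xi> \<in> cylinder x" and "\<eta> \<in> cylinder y"
  shows "conf \<xi> \<eta> = lcp_len x y"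
proof (rule conf_eqI)
  show "\<forall>i<lcp_len x y. \<xi> i = \<eta> i"
    using assms nth_less_lcp_len[of _ x y] by (auto simp: cylinder_def)
  show "\<xi> (lcp_len x y) \<noteq> \<eta> (lcp_len x y)"
    using assms nth_lcp_len_neq[of x y] by (auto simp: cylinder_def)
qed

lemma line_weight_incomparable:
  assumes "lcp_len x y < length x" and "lcp_len x y < length y"
  shows "line_weight x y \<xi> \<eta> = ennreal (4 ^ lcp_len x y) *
           (indicator (cylinder x \<times> cylinder y) (\<xi>, \<eta>) + indicator (cylinder y \<times> cylinder x) (\<xi>, \<eta>))"
proof -
  note disjoint = cylinder_Int_cylinder[OF assms]
  have conf: "conf \<alpha> \<beta> = lcp_len x y"
    if "\<alpha> \<in> cylinder x \<and> \<beta> \<in> cylinder y \<or> \<alpha> \<in> cylinder y \<and> \<beta> \<in> cylinder x" for \<alpha> \<beta>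
    using that conf_cylinder_cylinder[OF assms] conf_commute by metis
  have "(\<xi> \<noteq> \<eta> \<and> x \<in> Lambda \<xi> \<eta> \<and> y \<in> Lambda \<xi> \<eta>) \<longleftrightarrow>
        (\<xi> \<in> cylinder x \<and> \<eta> \<in> cylinder y \<or> \<xi> \<in> cylinder y \<and> \<eta> \<in> cylinder x)"
    using disjoint conf assms by (auto simp: mem_Lambda_iff)
  then show ?thesis
    using disjoint conf by (auto simp: line_weight_def indicator_def)
qed

lemma cylinder_Int_branch_cylinder: "k < length v \<Longrightarrow> cylinder v \<inter> branch_cylinder v k = {}"
  by (auto simp: cylinder_def branch_cylinder_def)

lemma conf_cylinder_branch_cylinder:
  "\<xi> \<in> cylinder v \<Longrightarrow> \<eta> \<in> branch_cylinder v k \<Longrightarrow> k < length v \<Longrightarrow> conf \<xi> \<eta> = k"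
  unfolding cylinder_def branch_cylinder_def by (intro conf_eqI) auto

lemma line_weight_ancestor:
  assumes "lcp_len x y = length x" and "length x < length y"
  shows "line_weight x y \<xi> \<eta> = (\<Sum>k\<le>length x. ennreal (4 ^ k) *
           (indicator (cylinder y \<times> branch_cylinder y k) (\<xi>, \<eta>)
            + indicator (branch_cylinder y k \<times> cylinder y) (\<xi>, \<eta>)))"
proof -
  let ?c = "conf \<xi> \<eta>"
  let ?branches = "\<lambda>k. \<xi> \<in> cylinder y \<and> \<eta> \<in> branch_cylinder y k \<or> \<xi> \<in> branch_cylinder y k \<and> \<eta> \<in> cylinder y"
  have conf: "?c = k" if "?branches k" "k < length y" for k
    using that conf_cylinder_branch_cylinder conf_commute by metis
  have "cylinder y \<subseteq> cylinder x"
    using assms nth_less_lcp_len[of _ x y] by (auto simp: cylinder_def)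
  have iff: "(\<xi> \<noteq> \<eta> \<and> x \<in> Lambda \<xi> \<eta> \<and> y \<in> Lambda \<xi> \<eta>) \<longleftrightarrow> ?c \<le> length x \<and> ?branches ?c"
  proof
    assume line: "\<xi> \<noteq> \<eta> \<and> x \<in> Lambda \<xi> \<eta> \<and> y \<in> Lambda \<xi> \<eta>"
    then have "?c \<le> length x" and "\<xi> \<in> cylinder y \<or> \<eta> \<in> cylinder y"
      by (auto simp: mem_Lambda_iff)
    moreover have "\<forall>i<?c. \<xi> i = \<eta> i" and "\<xi> ?c \<noteq> \<eta> ?c"
      using line conf_agree_differ by auto
    ultimately show "?c \<le> length x \<and> ?branches ?c"
      using assms(2) by (auto simp: cylinder_def branch_cylinder_def)
  next
    assume "?c \<le> length x \<and> ?branches ?c"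
    moreover from this have "\<xi> \<noteq> \<eta>"
      using assms(2) cylinder_Int_branch_cylinder[of ?c y] by auto
    ultimately show "\<xi> \<noteq> \<eta> \<and> x \<in> Lambda \<xi> \<eta> \<and> y \<in> Lambda \<xi> \<eta>"
      using assms(2) \<open>cylinder y \<subseteq> cylinder x\<close> by (auto simp: mem_Lambda_iff)
  qed
  have "ennreal (4 ^ k) * (indicator (cylinder y \<times> branch_cylinder y k) (\<xi>, \<eta>)
          + indicator (branch_cylinder y k \<times> cylinder y) (\<xi>, \<eta>))
        = (if k = ?c then (if ?branches ?c then ennreal (4 ^ ?c) else 0) else 0)"
    if "k \<le> length x" for k
  proof (cases "k = ?c")
    case True
    have "\<not> (\<xi> \<in> cylinder y \<and> \<xi> \<in> branch_cylinder y k)" "\<not> (\<eta> \<in> cylinder y \<and> \<eta> \<in> branch_cylinder y k)"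
      using that assms(2) cylinder_Int_branch_cylinder[of k y] by auto
    then show ?thesis using True by (auto simp: indicator_def)
  next
    case False
    then have "\<not> ?branches k" using that assms(2) conf[of k] by linarith
    then show ?thesis using False by (auto simp: indicator_def)
  qed
  then have "(\<Sum>k\<le>length x. ennreal (4 ^ k) *
           (indicator (cylinder y \<times> branch_cylinder y k) (\<xi>, \<eta>)
            + indicator (branch_cylinder y k \<times> cylinder y) (\<xi>, \<eta>)))
        = (if ?c \<le> length x \<and> ?branches ?c then ennreal (4 ^ ?c) else 0)"
    by (simp add: sum.delta)
  with iff show ?thesis by (simp add: line_weight_def)
qed

lemma two_power_mult_half_power: "m \<le> n \<Longrightarrow> (2::real) ^ m * (1/2) ^ n = (1/2) ^ (n - m)"
  by (simp add: power_one_over power_diff)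

lemma mu_lines_through_incomparable:
  assumes "is_vertex x" and "is_vertex y"
    and "lcp_len x y < length x" and "lcp_len x y < length y"
  shows "mu (lines_through x y) = ennreal (8/9 * (1/2) ^ tdist x y)"
proof -
  let ?m = "lcp_len x y"
  have "x \<noteq> []" and "y \<noteq> []" using assms(3,4) by auto
  have "mu (lines_through x y) = (\<integral>\<^sup>+ p. ennreal (4 ^ ?m) *
          (indicator (cylinder x \<times> cylinder y) p + indicator (cylinder y \<times> cylinder x) p) \<partial>(nbrw \<Otimes>\<^sub>M nbrw))"
    unfolding mu_lines_through_eq_nn_integral
    by (intro nn_integral_cong) (simp add: line_weight_incomparable[OF assms(3,4)])
  also have "\<dots> = ennreal (2 * 4 ^ ?m * measure nbrw (cylinder x) * measure nbrw (cylinder y))"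
    by (intro nn_integral_indicator_Times_symmetric finite_measure_nbrw) simp_all
  also have "\<dots> = ennreal (2 * 4 ^ ?m * (2/3 * (1/2) ^ length x) * (2/3 * (1/2) ^ length y))"
    using \<open>x \<noteq> []\<close> \<open>y \<noteq> []\<close> by (simp add: measure_cylinder assms(1,2))
  also have "\<dots> = ennreal (8/9 * (1/2) ^ tdist x y)"
  proof -
    have "(4::real) ^ ?m * (1/2) ^ (length x + length y) = (1/2) ^ tdist x y"
      using assms(3,4) two_power_mult_half_power[of "2 * ?m" "length x + length y"]
      by (simp add: tdist_def power_mult)
    then show ?thesis by (simp add: power_add field_simps)
  qed
  finally show ?thesis .
qed

lemma mu_lines_through_ancestor:
  assumes "is_vertex y" and "lcp_len x y = length x" and "length x < length y"
  shows "mu (lines_through x y) = ennreal (8/9 * (1/2) ^ tdist x y)"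
proof -
  let ?pairs = "\<lambda>k p. ennreal (4 ^ k) *
        (indicator (cylinder y \<times> branch_cylinder y k) p + indicator (branch_cylinder y k \<times> cylinder y) p)"
  have "y \<noteq> []" using assms(3) by auto
  have "mu (lines_through x y) = (\<integral>\<^sup>+ p. (\<Sum>k\<le>length x. ?pairs k p) \<partial>(nbrw \<Otimes>\<^sub>M nbrw))"
    unfolding mu_lines_through_eq_nn_integral
    by (intro nn_integral_cong) (simp add: line_weight_ancestor[OF assms(2,3)])
  also have "\<dots> = (\<Sum>k\<le>length x. \<integral>\<^sup>+ p. ?pairs k p \<partial>(nbrw \<Otimes>\<^sub>M nbrw))"
    by (rule nn_integral_sum) simp
  also have "\<dots> = (\<Sum>k\<le>length x. ennreal (4/3 * (1/2) ^ length y * (4 ^ k * branch_prob k)))"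
  proof (rule sum.cong)
    fix k assume "k \<in> {..length x}"
    then have "k < length y" using assms(3) by simp
    have "(\<integral>\<^sup>+ p. ?pairs k p \<partial>(nbrw \<Otimes>\<^sub>M nbrw))
        = ennreal (2 * 4 ^ k * measure nbrw (cylinder y) * measure nbrw (branch_cylinder y k))"
      by (intro nn_integral_indicator_Times_symmetric finite_measure_nbrw) simp_all
    also have "\<dots> = ennreal (4/3 * (1/2) ^ length y * (4 ^ k * branch_prob k))"
      using \<open>y \<noteq> []\<close> \<open>k < length y\<close> by (simp add: measure_cylinder measure_branch_cylinder assms(1) mult_ac)
    finally show "(\<integral>\<^sup>+ p. ?pairs k p \<partial>(nbrw \<Otimes>\<^sub>M nbrw))
        = ennreal (4/3 * (1/2) ^ length y * (4 ^ k * branch_prob k))" .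
  qed simp
  also have "\<dots> = ennreal (4/3 * (1/2) ^ length y * (\<Sum>k\<le>length x. 4 ^ k * branch_prob k))"
    using branch_prob_nonneg by (simp add: sum_ennreal sum_distrib_left)
  also have "\<dots> = ennreal (8/9 * (1/2) ^ tdist x y)"
    using assms(2,3) two_power_mult_half_power[of "length x" "length y"]
    by (simp add: sum_four_power_branch_prob tdist_def)
  finally show ?thesis .
qed

lemma lines_through_commute: "lines_through x y = lines_through y x"
  unfolding lines_through_def by blast

lemma tdist_commute: "tdist x y = tdist y x"
  unfolding tdist_def by (simp add: lcp_len_commute)

theorem mainTheorem4:
  fixes x y :: "nat list"
  assumes "is_vertex x" and "is_vertex y" and "x \<noteq> y"
  shows "mu (lines_through x y) = ennreal (8/9 * (1/2) ^ tdist x y)"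
proof -
  note lcp = lcp_len_le_length[of x y]
  consider "lcp_len x y = length x" | "lcp_len y x = length y" | "lcp_len x y < length x" "lcp_len x y < length y"
    using lcp by (metis lcp_len_commute order_less_le)
  then show ?thesis
  proof cases
    case 1
    then have "length x < length y"
      using lcp assms(3) lcp_len_eq_length_imp_eq by fastforce
    with 1 show ?thesis using mu_lines_through_ancestor assms(2) by blast
  next
    case 2
    then have "length y < length x"
      using lcp assms(3) lcp_len_eq_length_imp_eq lcp_len_commute by fastforce
    with 2 show ?thesis
      using mu_lines_through_ancestor assms(1) lines_through_commute tdist_commute by metis
  next
    case 3
    then show ?thesis using mu_lines_through_incomparable assms(1,2) by blast
  qed
qed

end
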